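(* Let $(X,d)$ be a compact metric space and $f_{0,\infty}=\{f_n\}_{n=0}^\infty$ a sequence of continuous self-maps of $X$. Let $N\ge2$ and let $V_1,\dots,V_N$ be nonempty, closed, mutually disjoint subsets of $X$ such that \[f_n(V_i)\supset\bigcup_{j=1}^{N}V_j\quad\text{for all }1\le i\le N,\ n\ge0.\] Then $h_A(f_{0,\infty})\geq\log N$ for every $A\in\mathcal{S}$.
   Context: $f_i^n=f_{i+n-1}\circ\cdots\circ f_i$ ($n\ge1$), $f_i^0=\mathrm{id}$, $f_i^{-n}(B)=(f_i^n)^{-1}(B)$. $\mathcal S$ is the set of strictly increasing sequences $A=\{a_i\}_{i\ge1}$ of nonnegative integers. For finite open covers, $\bigvee_{i=1}^n\mathscr A_i=\{\bigcap_i U_i:U_i\in\mathscr A_i\}$, $f_0^{-a}\mathscr A=\{f_0^{-a}(U):U\in\mathscr A\}$, $\mathcal N(\cdot)$ is the minimal cardinality of a subcover, and $h_A(f_{0,\infty})=\sup_{\mathscr A}\limsup_{n\to\infty}\frac1n\log\mathcal N(\bigvee_{i=1}^n f_0^{-a_i}\mathscr A)$ over finite open covers $\mathscr A$ of $X$. $\log$ is the natural logarithm. *)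

theory Defs
  imports "HOL-Analysis.Analysis" "HOL-Library.Liminf_Limsup"
begin

fun fiter :: "(nat \<Rightarrow> 'a \<Rightarrow> 'a) \<Rightarrow> nat \<Rightarrow> nat \<Rightarrow> 'a \<Rightarrow> 'a" where
  "fiter f i 0 = id"
| "fiter f i (Suc n) = f (i + n) \<circ> fiter f i n"

definition fpre :: "'a set \<Rightarrow> (nat \<Rightarrow> 'a \<Rightarrow> 'a) \<Rightarrow> nat \<Rightarrow> 'a set \<Rightarrow> 'a set" where
  "fpre X f a U = {x \<in> X. fiter f 0 a x \<in> U}"

definition fin_open_cover :: "'a::topological_space set \<Rightarrow> 'a set set \<Rightarrow> bool" where
  "fin_open_cover X C \<longleftrightarrow> finite C \<and> (\<forall>U\<in>C. openin (top_of_set X) U) \<and> \<Union>C = X"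

definition join_cover :: "'a set \<Rightarrow> (nat \<Rightarrow> 'a \<Rightarrow> 'a) \<Rightarrow> (nat \<Rightarrow> nat) \<Rightarrow> nat \<Rightarrow> 'a set set \<Rightarrow> 'a set set" where
  "join_cover X f a n C =
     {(\<Inter>i\<in>{1..n}. fpre X f (a i) (U i)) | U. \<forall>i\<in>{1..n}. U i \<in> C}"

definition ncov :: "'a set \<Rightarrow> 'a set set \<Rightarrow> nat" where
  "ncov X C = (LEAST k. \<exists>F. F \<subseteq> C \<and> finite F \<and> X \<subseteq> \<Union>F \<and> card F = k)"

definition seq_entropy :: "'a::topological_space set \<Rightarrow> (nat \<Rightarrow> 'a \<Rightarrow> 'a) \<Rightarrow> (nat \<Rightarrow> nat) \<Rightarrow> ereal" where
  "seq_entropy X f a =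
     (SUP C \<in> {C. fin_open_cover X C}.
        limsup (\<lambda>n. ereal (ln (real (ncov X (join_cover X f a n C))) / real n)))"

end

theory Submission
  imports Defs
begin

text \<open>Let \<open>U\<^sub>i = X - \<Union>\<^sub>j\<^sub>\<noteq>\<^sub>i V\<^sub>j\<close>; these sets form a finite open cover of \<open>X\<close>, and
  \<open>U\<^sub>i\<close> meets no \<open>V\<^sub>j\<close> with \<open>j \<noteq> i\<close>. Because every \<open>f\<^sub>n(V\<^sub>i)\<close> covers all the \<open>V\<^sub>j\<close>, any
  itinerary through the \<open>V\<^sub>j\<close> is followed by some orbit; in particular each of the \<open>N\<^sup>n\<close>
  words \<open>w\<close> gives a point whose orbit lies in \<open>V\<^bsub>w k\<^esub>\<close> at time \<open>a\<^sub>k\<close>. A member of the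
  \<open>n\<close>-th join of the cover \<open>{U\<^sub>i}\<close> contains at most one of these points, so the join
  needs at least \<open>N\<^sup>n\<close> members to cover \<open>X\<close>, and the entropy is at least \<open>log N\<close>.\<close>

lemma fiter_Suc_left: "fiter f i (Suc t) = fiter f (Suc i) t \<circ> f i"
  by (induction t) (auto simp: fun_eq_iff)

lemma fiter_in_space: "(\<And>n. f n ` X \<subseteq> X) \<Longrightarrow> x \<in> X \<Longrightarrow> fiter f i t x \<in> X"
  by (induction t) auto

lemma exists_orbit_following_itinerary:
  assumes nonempty: "\<And>i. i \<in> I \<Longrightarrow> V i \<noteq> {}"
    and covering: "\<And>i n. i \<in> I \<Longrightarrow> (\<Union>j\<in>I. V j) \<subseteq> f n ` V i"
    and itinerary: "\<And>t. c t \<in> I"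
  shows "\<exists>x\<in>V (c 0). \<forall>t\<le>T. fiter f i t x \<in> V (c t)"
  using itinerary
proof (induction T arbitrary: i c)
  case 0
  then show ?case using nonempty by fastforce
next
  case (Suc T)
  from Suc.IH[of "c \<circ> Suc" "Suc i"] Suc.prems obtain y where
    y: "y \<in> V (c 1)" "\<forall>t\<le>T. fiter f (Suc i) t y \<in> V (c (Suc t))" by auto
  have "y \<in> f i ` V (c 0)" using covering[of "c 0" i] Suc.prems y(1) by blast
  then obtain x where x: "x \<in> V (c 0)" "f i x = y" by blast
  have "fiter f i t x \<in> V (c t)" if "t \<le> Suc T" for t
    using that x y by (cases t) (auto simp del: fiter.simps(2) simp: fiter_Suc_left)
  then show ?case using x by blast
qed

lemma exists_orbit_visiting_at_times:
  assumes nonempty: "\<And>i. i \<in> I \<Longrightarrow> V i \<noteq> {}"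
    and covering: "\<And>i n. i \<in> I \<Longrightarrow> (\<Union>j\<in>I. V j) \<subseteq> f n ` V i"
    and "\<And>i. i \<in> I \<Longrightarrow> V i \<subseteq> X" and "I \<noteq> {}"
    and "finite K" "inj_on a K" "w \<in> K \<rightarrow> I"
  shows "\<exists>x\<in>X. \<forall>k\<in>K. fiter f 0 (a k) x \<in> V (w k)"
proof -
  obtain i\<^sub>0 where "i\<^sub>0 \<in> I" using \<open>I \<noteq> {}\<close> by blast
  define c where "c t = (if t \<in> a ` K then w (inv_into K a t) else i\<^sub>0)" for t
  have c: "c t \<in> I" for t
    using \<open>w \<in> K \<rightarrow> I\<close> \<open>i\<^sub>0 \<in> I\<close> inv_into_into[of t a K] unfolding c_def by (simp add: Pi_iff)
  have "\<exists>x\<in>V (c 0). \<forall>t\<le>(\<Sum>k\<in>K. a k). fiter f 0 t x \<in> V (c t)"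
    using nonempty covering c by (rule exists_orbit_following_itinerary)
  then obtain x where x: "x \<in> V (c 0)" "\<forall>t\<le>(\<Sum>k\<in>K. a k). fiter f 0 t x \<in> V (c t)" ..
  have "fiter f 0 (a k) x \<in> V (w k)" if "k \<in> K" for k
  proof -
    have "a k \<le> (\<Sum>k\<in>K. a k)" using that \<open>finite K\<close> by (intro member_le_sum) auto
    moreover have "c (a k) = w k" unfolding c_def using that inv_into_f_f[OF \<open>inj_on a K\<close>] by auto
    ultimately show ?thesis using x(2) by metis
  qed
  moreover have "x \<in> X" using x(1) c assms(3) by blast
  ultimately show ?thesis by blast
qed

lemma ncov_attained:
  assumes "finite J" "X \<subseteq> \<Union>J"
  obtains F where "F \<subseteq> J" "finite F" "X \<subseteq> \<Union>F" "card F = ncov X J"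
proof -
  have "\<exists>k F. F \<subseteq> J \<and> finite F \<and> X \<subseteq> \<Union>F \<and> card F = k" using assms by blast
  from LeastI_ex[OF this] show ?thesis using that unfolding ncov_def by blast
qed

lemma card_le_ncov_if_separated:
  assumes "finite J" "X \<subseteq> \<Union>J" "finite W" "p ` W \<subseteq> X"
    and separated: "\<And>w v S. w \<in> W \<Longrightarrow> v \<in> W \<Longrightarrow> S \<in> J \<Longrightarrow> p w \<in> S \<Longrightarrow> p v \<in> S \<Longrightarrow> w = v"
  shows "card W \<le> ncov X J"
proof -
  obtain F where F: "F \<subseteq> J" "finite F" "X \<subseteq> \<Union>F" "card F = ncov X J"
    using ncov_attained[OF assms(1,2)] .
  have "\<forall>w\<in>W. \<exists>S\<in>F. p w \<in> S" using F(3) assms(4) by blast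
  then obtain g where g: "\<And>w. w \<in> W \<Longrightarrow> g w \<in> F \<and> p w \<in> g w" by metis
  have "inj_on g W"
    using g F(1) separated by (intro inj_onI) (metis subsetD)
  then have "card W \<le> card F" using g F(2) by (intro card_inj_on_le) auto
  then show ?thesis using F(4) by simp
qed

lemma finite_join_cover: "finite C \<Longrightarrow> finite (join_cover X f a n C)"
proof -
  let ?g = "\<lambda>U. \<Inter>i\<in>{1..n}. fpre X f (a i) (U i)"
  assume "finite C"
  have "join_cover X f a n C \<subseteq> ?g ` PiE {1..n} (\<lambda>_. C)"
  proof
    fix S assume "S \<in> join_cover X f a n C"
    then obtain U where "S = ?g U" "\<forall>i\<in>{1..n}. U i \<in> C"
      unfolding join_cover_def by blast
    then have "S = ?g (restrict U {1..n})" "restrict U {1..n} \<in> PiE {1..n} (\<lambda>_. C)" by auto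
    then show "S \<in> ?g ` PiE {1..n} (\<lambda>_. C)" by blast
  qed
  then show ?thesis using \<open>finite C\<close> by (meson finite_PiE finite_atLeastAtMost finite_imageI finite_subset)
qed

lemma join_cover_covers:
  assumes "X \<subseteq> \<Union>C" "\<And>n. f n ` X \<subseteq> X"
  shows "X \<subseteq> \<Union>(join_cover X f a n C)"
proof
  fix x assume "x \<in> X"
  then have "\<forall>i. \<exists>S\<in>C. fiter f 0 (a i) x \<in> S"
    using assms(1) fiter_in_space[OF assms(2)] by (meson UnionE subsetD)
  then obtain U where U: "\<And>i. U i \<in> C \<and> fiter f 0 (a i) x \<in> U i" by metis
  have "(\<Inter>i\<in>{1..n}. fpre X f (a i) (U i)) \<in> join_cover X f a n C"
    unfolding join_cover_def using U by blast
  moreover have "x \<in> (\<Inter>i\<in>{1..n}. fpre X f (a i) (U i))"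
    using U \<open>x \<in> X\<close> unfolding fpre_def by auto
  ultimately show "x \<in> \<Union>(join_cover X f a n C)" by blast
qed

lemma join_cover_common_member:
  assumes "S \<in> join_cover X f a n C" "x \<in> S" "y \<in> S" "k \<in> {1..n}"
  obtains U where "U \<in> C" "fiter f 0 (a k) x \<in> U" "fiter f 0 (a k) y \<in> U"
proof -
  obtain W where "S = (\<Inter>i\<in>{1..n}. fpre X f (a i) (W i))" "\<forall>i\<in>{1..n}. W i \<in> C"
    using assms(1) unfolding join_cover_def by blast
  then show ?thesis using that assms(2-4) unfolding fpre_def by blast
qed

definition isolating_set :: "'a set \<Rightarrow> ('i \<Rightarrow> 'a set) \<Rightarrow> 'i set \<Rightarrow> 'i \<Rightarrow> 'a set" where
  "isolating_set X V I i = X - (\<Union>j\<in>I - {i}. V j)"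

lemma isolating_set_meets_only_own:
  "j \<in> I \<Longrightarrow> z \<in> isolating_set X V I i \<Longrightarrow> z \<in> V j \<Longrightarrow> j = i"
  unfolding isolating_set_def by blast

lemma Union_isolating_sets:
  assumes "I \<noteq> {}" and disjoint: "\<And>i j. i \<in> I \<Longrightarrow> j \<in> I \<Longrightarrow> i \<noteq> j \<Longrightarrow> V i \<inter> V j = {}"
  shows "\<Union>(isolating_set X V I ` I) = X"
proof -
  have "x \<in> \<Union>(isolating_set X V I ` I)" if "x \<in> X" for x
  proof (cases "\<exists>k\<in>I. x \<in> V k")
    case True
    then obtain k where "k \<in> I" "x \<in> V k" by blast
    then have "x \<in> isolating_set X V I k" using \<open>x \<in> X\<close> disjoint unfolding isolating_set_def by blast
    then show ?thesis using \<open>k \<in> I\<close> by blast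
  next
    case False
    then show ?thesis using \<open>x \<in> X\<close> \<open>I \<noteq> {}\<close> unfolding isolating_set_def by blast
  qed
  then show ?thesis unfolding isolating_set_def by blast
qed

lemma fin_open_cover_isolating_sets:
  fixes X :: "'a::topological_space set"
  assumes "finite I" "I \<noteq> {}" "\<And>i. i \<in> I \<Longrightarrow> closed (V i)"
    and "\<And>i j. i \<in> I \<Longrightarrow> j \<in> I \<Longrightarrow> i \<noteq> j \<Longrightarrow> V i \<inter> V j = {}"
  shows "fin_open_cover X (isolating_set X V I ` I)"
  unfolding fin_open_cover_def
proof (intro conjI ballI)
  show "finite (isolating_set X V I ` I)" using \<open>finite I\<close> by simp
next
  fix S assume "S \<in> isolating_set X V I ` I"
  then obtain i where "S = X \<inter> - (\<Union>j\<in>I - {i}. V j)" unfolding isolating_set_def by blast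
  moreover have "closed (\<Union>j\<in>I - {i}. V j)" using assms(1,3) by (intro closed_UN) auto
  ultimately show "openin (top_of_set X) S" by blast
next
  show "\<Union>(isolating_set X V I ` I) = X" using assms(2,4) by (rule Union_isolating_sets)
qed

lemma card_pow_le_ncov_join_isolating_sets:
  assumes "finite I" "I \<noteq> {}"
    and nonempty: "\<And>i. i \<in> I \<Longrightarrow> V i \<noteq> {}" and "\<And>i. i \<in> I \<Longrightarrow> V i \<subseteq> X"
    and disjoint: "\<And>i j. i \<in> I \<Longrightarrow> j \<in> I \<Longrightarrow> i \<noteq> j \<Longrightarrow> V i \<inter> V j = {}"
    and covering: "\<And>i n. i \<in> I \<Longrightarrow> (\<Union>j\<in>I. V j) \<subseteq> f n ` V i"
    and "\<And>n. f n ` X \<subseteq> X" and "inj_on a {1..n}"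
  shows "card I ^ n \<le> ncov X (join_cover X f a n (isolating_set X V I ` I))"
proof -
  let ?C = "isolating_set X V I ` I" and ?W = "PiE {1..n} (\<lambda>_. I)"
  have "\<exists>x\<in>X. \<forall>k\<in>{1..n}. fiter f 0 (a k) x \<in> V (w k)" if "w \<in> ?W" for w
    by (rule exists_orbit_visiting_at_times[OF nonempty covering assms(4,2) _ assms(8)])
      (use that in auto)
  then obtain p where p: "\<And>w. w \<in> ?W \<Longrightarrow> p w \<in> X \<and> (\<forall>k\<in>{1..n}. fiter f 0 (a k) (p w) \<in> V (w k))"
    by metis
  have "card ?W \<le> ncov X (join_cover X f a n ?C)"
  proof (rule card_le_ncov_if_separated)
    show "finite (join_cover X f a n ?C)" using \<open>finite I\<close> by (simp add: finite_join_cover)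
    show "X \<subseteq> \<Union>(join_cover X f a n ?C)"
      using Union_isolating_sets[OF \<open>I \<noteq> {}\<close> disjoint] assms(7) by (intro join_cover_covers) auto
    show "finite ?W" using \<open>finite I\<close> by (simp add: finite_PiE)
    show "p ` ?W \<subseteq> X" using p by blast
  next
    fix w v S assume wv: "w \<in> ?W" "v \<in> ?W" and S: "S \<in> join_cover X f a n ?C" "p w \<in> S" "p v \<in> S"
    have "w k = v k" if k: "k \<in> {1..n}" for k
    proof -
      obtain U where "U \<in> ?C" "fiter f 0 (a k) (p w) \<in> U" "fiter f 0 (a k) (p v) \<in> U"
        using join_cover_common_member[OF S k] .
      then obtain j where "fiter f 0 (a k) (p w) \<in> isolating_set X V I j"
        "fiter f 0 (a k) (p v) \<in> isolating_set X V I j" by blast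
      moreover have "fiter f 0 (a k) (p w) \<in> V (w k)" "fiter f 0 (a k) (p v) \<in> V (v k)"
        using p wv k by blast+
      moreover have "w k \<in> I" "v k \<in> I" using wv k by auto
      ultimately show ?thesis using isolating_set_meets_only_own by metis
    qed
    then show "w = v" by (rule PiE_ext[OF wv])
  qed
  then show ?thesis by (simp add: card_PiE)
qed

lemma ln_le_limsup_ln_div_of_pow_le:
  fixes g :: "nat \<Rightarrow> real"
  assumes "b > 0" "\<And>n. b ^ n \<le> g n"
  shows "ereal (ln b) \<le> limsup (\<lambda>n. ereal (ln (g n) / real n))"
proof (rule le_Limsup)
  show "\<forall>\<^sub>F n in sequentially. ereal (ln b) \<le> ereal (ln (g n) / real n)"
    unfolding eventually_sequentially
  proof (intro exI allI impI)
    fix n :: nat assume "1 \<le> n"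
    have "real n * ln b = ln (b ^ n)" using \<open>b > 0\<close> by (simp add: ln_realpow)
    also have "\<dots> \<le> ln (g n)" using assms by (intro ln_mono) auto
    finally show "ereal (ln b) \<le> ereal (ln (g n) / real n)"
      using \<open>1 \<le> n\<close> by (simp add: field_simps)
  qed
qed simp

lemma seq_entropy_ge_ln_of_pow_le_ncov:
  assumes "fin_open_cover X C" "b > 0" "\<And>n. b ^ n \<le> real (ncov X (join_cover X f a n C))"
  shows "ereal (ln b) \<le> seq_entropy X f a"
proof -
  have "ereal (ln b) \<le> limsup (\<lambda>n. ereal (ln (real (ncov X (join_cover X f a n C))) / real n))"
    using assms(2,3) by (rule ln_le_limsup_ln_div_of_pow_le)
  also have "\<dots> \<le> seq_entropy X f a"
    unfolding seq_entropy_def using assms(1) by (intro SUP_upper) auto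
  finally show ?thesis .
qed

theorem theorem3p4:
  fixes X :: "'a::metric_space set" and f :: "nat \<Rightarrow> 'a \<Rightarrow> 'a"
    and N :: nat and V :: "nat \<Rightarrow> 'a set" and a :: "nat \<Rightarrow> nat"
  assumes "compact X"
    and "\<And>n. continuous_on X (f n)" and "\<And>n. f n ` X \<subseteq> X"
    and "N \<ge> 2"
    and "\<And>i. i \<in> {1..N} \<Longrightarrow> V i \<noteq> {} \<and> closed (V i) \<and> V i \<subseteq> X"
    and "\<And>i j. i \<in> {1..N} \<Longrightarrow> j \<in> {1..N} \<Longrightarrow> i \<noteq> j \<Longrightarrow> V i \<inter> V j = {}"
    and "\<And>i n. i \<in> {1..N} \<Longrightarrow> (\<Union>j\<in>{1..N}. V j) \<subseteq> f n ` V i"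
    and "strict_mono_on {1..} a"
  shows "seq_entropy X f a \<ge> ereal (ln (real N))"
proof -
  let ?C = "isolating_set X V {1..N} ` {1..N}"
  have "{1..N} \<noteq> {}" using \<open>N \<ge> 2\<close> by simp
  have cover: "fin_open_cover X ?C"
    using \<open>{1..N} \<noteq> {}\<close> assms(5,6) by (intro fin_open_cover_isolating_sets) auto
  have "inj_on a {1..n}" for n
    using strict_mono_on_imp_inj_on[OF assms(8)] by (rule inj_on_subset) auto
  then have "card {1..N} ^ n \<le> ncov X (join_cover X f a n ?C)" for n
    using \<open>{1..N} \<noteq> {}\<close> assms(3,5-7) by (intro card_pow_le_ncov_join_isolating_sets) auto
  then have growth: "real N ^ n \<le> real (ncov X (join_cover X f a n ?C))" for n
    by (metis card_atLeastAtMost diff_Suc_1 of_nat_le_iff of_nat_power)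
  show ?thesis
    using seq_entropy_ge_ln_of_pow_le_ncov[OF cover _ growth] \<open>N \<ge> 2\<close> by simp
qed

end
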